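(* Let $T_1,\ldots,T_N$ be a colored tiling of the sphere $\mathbb{S}^d$ (finitely many closed tiles covering $\mathbb{S}^d$, distinct tiles meeting only in their boundaries) such that every tile and every non-empty intersection of tiles is a disjoint union of finitely many contractible sets. Assume each $T_i$ has an open neighborhood $U_i\supseteq T_i$ in $\mathbb{S}^d$ such that for every set of indices $I$, $\bigcap_{i\in I}U_i\ne\emptyset$ if and only if $\bigcap_{i\in I}T_i\ne\emptyset$, and every $U_i$ and every non-empty intersection of the $U_i$'s is a disjoint union of finitely many contractible sets. Then there exist $d+1$ distinct tiles with a common point. Consequently, if no two distinct tiles of the same color intersect, the number of colors is at least $d+1$.
   Context: A set is contractible if its identity map is homotopic to a constant map. A colored tiling assigns a color to each tile. *)

theory Defs
  imports "HOL-Analysis.Analysis"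
begin

text \<open>A set is a (topological) disjoint union of finitely many contractible sets:
  it is the union of a finite family of pairwise disjoint contractible sets,
  each of which is open and closed in the subspace topology of the union
  (i.e. the pieces are the summands of a topological disjoint union).\<close>
definition fin_disj_union_contractible :: "'a::real_normed_vector set \<Rightarrow> bool" where
  "fin_disj_union_contractible S \<longleftrightarrow>
     (\<exists>\<C>. finite \<C> \<and> \<Union>\<C> = S \<and> pairwise disjnt \<C> \<and>
          (\<forall>C\<in>\<C>. contractible C \<and> openin (top_of_set S) C \<and> closedin (top_of_set S) C))"

end

theory Submission imports Defs "HOL-Homology.Homology" begin

text \<open>The open neighbourhoods \<open>U i\<close> cover the sphere and all their nonempty intersections
  are acyclic. A Mayer--Vietoris induction over such a cover shows that \<open>H\<^sub>p\<close> of its union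
  vanishes for \<open>p \<ge> k\<close> as soon as no \<open>k + 1\<close> members meet; since \<open>H\<^sub>d(S\<^sup>d) \<noteq> 0\<close>, some
  \<open>d + 1\<close> neighbourhoods meet, hence so do the corresponding tiles, and tiles with a common
  point have pairwise distinct colours.\<close>

lemma exact_seq_trivial_middle:
  assumes "exact_seq ([C, B, A], [g, f])" "trivial_group A" "trivial_group C"
  shows "trivial_group B"
proof -
  from assms(1) have f: "group_hom A B f" and g: "group_hom B C g"
    and ker: "kernel B C g = f ` carrier A"
    by (auto simp: group_hom_def group_hom_axioms_def)
  have "f ` carrier A = {\<one>\<^bsub>B\<^esub>}"
    using group_hom.image_from_trivial_group[OF f assms(2)] .
  moreover have "kernel B C g = carrier B"
    using group_hom.kernel_to_trivial_group[OF g assms(3)] .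
  ultimately show ?thesis
    using ker f by (simp add: trivial_group_def group_hom_def)
qed

lemma trivial_group_DirProd:
  assumes "trivial_group G" "trivial_group H"
  shows "trivial_group (DirProd G H)"
  using assms by (auto simp: trivial_group_def DirProd_group)

text \<open>Only nonzero degrees are constrained, so the empty space counts as acyclic.\<close>
definition acyclic_space :: "'a topology \<Rightarrow> bool" where
  "acyclic_space X \<longleftrightarrow> (\<forall>p. p \<noteq> 0 \<longrightarrow> trivial_group (homology_group p X))"

lemma acyclic_space_empty: "topspace X = {} \<Longrightarrow> acyclic_space X"
  by (simp add: acyclic_space_def trivial_homology_group_empty)

lemma acyclic_space_contractible_space:
  assumes "contractible_space X"
  shows "acyclic_space X"
  using trivial_reduced_homology_group_contractible_space[OF assms]
  unfolding acyclic_space_def by (metis un_reduced_homology_group)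

lemma acyclic_space_disjoint_open_Union:
  assumes "finite \<C>" "\<Union>\<C> = topspace X" "pairwise disjnt \<C>"
    and "\<And>C. C \<in> \<C> \<Longrightarrow> openin X C \<and> acyclic_space (subtopology X C)"
  shows "acyclic_space X"
  using assms
proof (induction \<C> arbitrary: X rule: finite_induct)
  case empty
  then show ?case by (simp add: acyclic_space_empty)
next
  case (insert C \<C>)
  define S where "S = \<Union>\<C>"
  have top: "C \<union> S = topspace X" using insert.prems(1) by (simp add: S_def)
  have disj: "disjnt C S"
    using insert.prems(2) insert.hyps(2) unfolding S_def pairwise_def by (auto simp: disjnt_def)
  have open_C: "openin X C" and acyclic_C: "acyclic_space (subtopology X C)"
    using insert.prems(3) by auto
  have open_S: "openin X S"
    using insert.prems(3) unfolding S_def by (intro openin_Union) auto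
  have acyclic_S: "acyclic_space (subtopology X S)"
  proof (rule insert.IH)
    show "\<Union>\<C> = topspace (subtopology X S)"
      using top by (auto simp: S_def)
    show "pairwise disjnt \<C>"
      using insert.prems(2) by (simp add: pairwise_insert)
    fix D assume "D \<in> \<C>"
    with insert.prems(3) have "openin X D" "acyclic_space (subtopology X D)" "D \<subseteq> S"
      by (auto simp: S_def)
    then show "openin (subtopology X S) D \<and> acyclic_space (subtopology (subtopology X S) D)"
      by (metis Int_absorb1 openin_subtopology_Int2 subtopology_subtopology)
  qed
  show ?case
    unfolding acyclic_space_def
  proof (intro allI impI)
    fix p :: int
    assume "p \<noteq> 0"
    then have "trivial_group (homology_group p (subtopology X C) \<times>\<times> homology_group p (subtopology X S))"
      using acyclic_C acyclic_S by (simp add: acyclic_space_def trivial_group_DirProd)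
    moreover have "homology_group p (subtopology X C) \<times>\<times> homology_group p (subtopology X S)
        \<cong> homology_group p X"
      using homology_additivity_explicit[OF open_C open_S disj top] by (rule is_isoI)
    ultimately show "trivial_group (homology_group p X)"
      by (meson isomorphic_group_triviality1 group_relative_homology_group)
  qed
qed

lemma acyclic_space_fin_disj_union_contractible:
  assumes "fin_disj_union_contractible S"
  shows "acyclic_space (top_of_set S)"
proof -
  obtain \<C> where \<C>: "finite \<C>" "\<Union>\<C> = S" "pairwise disjnt \<C>"
    and pieces: "\<And>C. C \<in> \<C> \<Longrightarrow> contractible C \<and> openin (top_of_set S) C"
    using assms by (auto simp: fin_disj_union_contractible_def)
  show ?thesis
  proof (rule acyclic_space_disjoint_open_Union)
    show "finite \<C>" "\<Union>\<C> = topspace (top_of_set S)" "pairwise disjnt \<C>"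
      using \<C> by auto
    fix C
    assume C: "C \<in> \<C>"
    then have "C \<subseteq> S"
      using \<C>(2) by blast
    then have "subtopology (top_of_set S) C = top_of_set C"
      by (simp add: subtopology_subtopology Int_absorb1)
    then show "openin (top_of_set S) C \<and> acyclic_space (subtopology (top_of_set S) C)"
      using pieces[OF C] by (simp add: acyclic_space_contractible_space)
  qed
qed

text \<open>Excising \<open>A - B\<close>, which is closed in \<open>A \<union> B\<close> and contained in the open set \<open>A\<close>,
  identifies \<open>H\<^sub>p(A \<union> B, A)\<close> with \<open>H\<^sub>p(B, A \<inter> B)\<close>; both long exact sequences then force
  the vanishing.\<close>
lemma trivial_homology_group_Un_openin:
  assumes A: "openin X A" and B: "openin X B"
    and hA: "trivial_group (homology_group p (subtopology X A))"
    and hB: "trivial_group (homology_group p (subtopology X B))"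
    and hAB: "trivial_group (homology_group (p - 1) (subtopology X (A \<inter> B)))"
  shows "trivial_group (homology_group p (subtopology X (A \<union> B)))"
proof -
  define Y where "Y = subtopology X (A \<union> B)"
  have topY: "topspace Y = A \<union> B"
    using openin_subset[OF A] openin_subset[OF B] by (auto simp: Y_def)
  have open_AY: "openin Y A"
    unfolding Y_def using openin_subtopology_Int2[OF A, of "A \<union> B"] by (simp add: Int_absorb1)
  have open_BY: "openin Y B"
    unfolding Y_def using openin_subtopology_Int2[OF B, of "A \<union> B"] by (simp add: Int_absorb1)
  have "A - B = topspace Y - B"
    using topY by auto
  then have "closedin Y (A - B)"
    using open_BY by (simp add: closedin_diff)
  then have "Y closure_of (A - B) \<subseteq> Y interior_of A"
    using open_AY by (simp add: closure_of_closedin interior_of_openin)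
  then have excision: "hom_induced p (subtopology Y (topspace Y - (A - B))) (A - (A - B))
        (subtopology Y (topspace Y)) A id
      \<in> iso (relative_homology_group p (subtopology Y (topspace Y - (A - B))) (A - (A - B)))
            (relative_homology_group p (subtopology Y (topspace Y)) A)"
    by (rule homology_excision_axiom) (simp add: topY)
  have "subtopology Y (topspace Y - (A - B)) = subtopology X B"
  proof -
    have "(A \<union> B) \<inter> (topspace Y - (A - B)) = B"
      using topY by auto
    then show ?thesis
      by (simp add: Y_def subtopology_subtopology)
  qed
  moreover have "A - (A - B) = A \<inter> B"
    by auto
  ultimately have "relative_homology_group p (subtopology X B) (A \<inter> B) \<cong> relative_homology_group p Y A"
    using is_isoI[OF excision] by simp
  moreover have "trivial_group (relative_homology_group p (subtopology X B) (A \<inter> B))"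
  proof (rule exact_seq_trivial_middle[OF homology_exactness_axiom_1[of p "subtopology X B" "A \<inter> B"] hB])
    have "subtopology (subtopology X B) (A \<inter> B) = subtopology X (A \<inter> B)"
      by (simp add: subtopology_subtopology Int_commute Int_left_commute)
    then show "trivial_group (homology_group (p - 1) (subtopology (subtopology X B) (A \<inter> B)))"
      using hAB by simp
  qed
  ultimately have "trivial_group (relative_homology_group p Y A)"
    by (meson isomorphic_group_triviality1 group_relative_homology_group)
  moreover have "subtopology Y A = subtopology X A"
    by (simp add: Y_def subtopology_subtopology Int_absorb1)
  ultimately show ?thesis
    using exact_seq_trivial_middle[OF homology_exactness_axiom_3[of p Y A]] hA
    by (simp add: Y_def)
qed

lemma trivial_homology_group_Union_nerve:
  assumes "finite J" and "\<And>j. j \<in> J \<Longrightarrow> openin X (U j)"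
    and "\<And>I. I \<subseteq> J \<Longrightarrow> I \<noteq> {} \<Longrightarrow> acyclic_space (subtopology X (\<Inter>i\<in>I. U i))"
    and "\<And>I. I \<subseteq> J \<Longrightarrow> card I = Suc k \<Longrightarrow> (\<Inter>i\<in>I. U i) = {}"
    and "int k \<le> p"
  shows "trivial_group (homology_group p (subtopology X (\<Union>j\<in>J. U j)))"
  using assms
proof (induction J arbitrary: U k p rule: finite_induct)
  case empty
  then show ?case by (simp add: trivial_homology_group_empty)
next
  case (insert n J)
  show ?case
  proof (cases k)
    case 0
    then have "U j = {}" if "j \<in> insert n J" for j
      using insert.prems(3)[of "{j}"] that by auto
    then show ?thesis by (simp add: trivial_homology_group_empty)
  next
    case (Suc k')
    have p: "p \<noteq> 0" "int k' \<le> p - 1"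
      using Suc insert.prems(4) by auto
    have Inter_insert: "(\<Inter>i\<in>I. U i \<inter> U n) = (\<Inter>i\<in>insert n I. U i)" if "I \<noteq> {}" for I
      using that by auto
    have "trivial_group (homology_group p (subtopology X (\<Union>j\<in>J. U j)))"
      using insert.prems by (intro insert.IH) auto
    moreover have "trivial_group (homology_group p (subtopology X (U n)))"
      using insert.prems(2)[of "{n}"] p(1) by (simp add: acyclic_space_def)
    moreover have "trivial_group (homology_group (p - 1) (subtopology X (\<Union>j\<in>J. U j \<inter> U n)))"
    proof (rule insert.IH)
      show "openin X (U j \<inter> U n)" if "j \<in> J" for j
        using that insert.prems(1) by blast
      show "acyclic_space (subtopology X (\<Inter>i\<in>I. U i \<inter> U n))" if "I \<subseteq> J" "I \<noteq> {}" for I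
        using that insert.prems(2)[of "insert n I"] Inter_insert[of I] by (metis insert_mono insert_not_empty)
      show "(\<Inter>i\<in>I. U i \<inter> U n) = {}" if "I \<subseteq> J" "card I = Suc k'" for I
      proof -
        have "n \<notin> I" "finite I" "I \<noteq> {}"
          using that insert.hyps finite_subset by auto
        then have "card (insert n I) = Suc k"
          using that Suc by simp
        then show ?thesis
          using that insert.prems(3)[of "insert n I"] \<open>I \<noteq> {}\<close> by (auto simp: Inter_insert)
      qed
    qed (use p in auto)
    ultimately have "trivial_group (homology_group p (subtopology X ((\<Union>j\<in>J. U j) \<union> U n)))"
      using insert.prems(1) by (intro trivial_homology_group_Un_openin) (auto simp: Int_UN_distrib2)
    then show ?thesis
      by (simp add: Un_commute)
  qed
qed

lemma nontrivial_homology_group_nsphere: "\<not> trivial_group (homology_group (int n) (nsphere n))"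
proof
  assume "trivial_group (homology_group (int n) (nsphere n))"
  then have "trivial_group (reduced_homology_group (int n) (nsphere n))"
    unfolding reduced_homology_group_def
    by (subst group.trivial_group_subgroup_generated_eq) (auto simp: trivial_group_def)
  then show False
    by (simp add: trivial_reduced_homology_group_nsphere)
qed

lemma nontrivial_homology_group_sphere:
  assumes "DIM('a::euclidean_space) = Suc n"
  shows "\<not> trivial_group (homology_group (int n) (top_of_set (sphere (0::'a) 1)))"
proof -
  obtain f :: "(nat \<Rightarrow> real) \<Rightarrow> 'a" and g
    where "homeomorphic_maps (nsphere (DIM('a) - 1)) (top_of_set (sphere 0 1 \<inter> span Basis)) f g"
    using homeomorphic_maps_nsphere_euclidean_sphere[OF independent_Basis orthogonal_Basis refl]
      norm_Basis by auto
  then have "nsphere n homeomorphic_space top_of_set (sphere (0::'a) 1)"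
    using assms unfolding homeomorphic_space_def by auto
  then have "homology_group n (nsphere n) \<cong> homology_group n (top_of_set (sphere (0::'a) 1))"
    by (rule homeomorphic_space_imp_isomorphic_homology_groups)
  then show ?thesis
    using nontrivial_homology_group_nsphere isomorphic_group_triviality by fastforce
qed

lemma acyclic_open_cover_sphere_meeting:
  fixes U :: "'b \<Rightarrow> 'a::euclidean_space set"
  assumes "DIM('a) = Suc d" and "finite J"
    and open_U: "\<And>j. j \<in> J \<Longrightarrow> openin (top_of_set (sphere 0 1)) (U j)"
    and cover: "(\<Union>j\<in>J. U j) = sphere 0 1"
    and acyclic_U: "\<And>I. I \<subseteq> J \<Longrightarrow> I \<noteq> {} \<Longrightarrow> acyclic_space (top_of_set (\<Inter>i\<in>I. U i))"
  shows "\<exists>I\<subseteq>J. card I = Suc d \<and> (\<Inter>i\<in>I. U i) \<noteq> {}"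
proof (rule ccontr)
  assume "\<not> ?thesis"
  then have "trivial_group (homology_group d (subtopology (top_of_set (sphere 0 1)) (\<Union>j\<in>J. U j)))"
  proof (intro trivial_homology_group_Union_nerve[OF \<open>finite J\<close> open_U])
    fix I
    assume I: "I \<subseteq> J" "I \<noteq> {}"
    then have "(\<Inter>i\<in>I. U i) \<subseteq> sphere 0 1"
      using open_U openin_subset by fastforce
    then show "acyclic_space (subtopology (top_of_set (sphere 0 1)) (\<Inter>i\<in>I. U i))"
      using acyclic_U[OF I] by (simp add: subtopology_subtopology Int_absorb1)
  qed auto
  with cover nontrivial_homology_group_sphere[OF assms(1)] show False
    by (simp add: subtopology_subtopology)
qed

lemma card_le_card_image_if_Inter_nonempty:
  assumes "I \<subseteq> A" "finite A" "(\<Inter>i\<in>I. T i) \<noteq> {}"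
    and "\<And>i j. i \<in> A \<Longrightarrow> j \<in> A \<Longrightarrow> i \<noteq> j \<Longrightarrow> col i = col j \<Longrightarrow> T i \<inter> T j = {}"
  shows "card I \<le> card (col ` A)"
proof -
  have "inj_on col I"
    using assms by (intro inj_onI) blast
  then have "card I = card (col ` I)"
    by (simp add: card_image)
  also have "\<dots> \<le> card (col ` A)"
    using assms(1,2) by (intro card_mono) auto
  finally show ?thesis .
qed

theorem proposition3p4:
  fixes T U :: "nat \<Rightarrow> 'a::euclidean_space set"
    and col :: "nat \<Rightarrow> 'c"
    and N d :: nat
  assumes dim: "DIM('a) = d + 1"
    and tiles_closed: "\<And>i. i < N \<Longrightarrow> closed (T i) \<and> T i \<subseteq> sphere 0 1"
    and tiles_cover: "(\<Union>i<N. T i) = sphere 0 1"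
    and tiles_distinct: "inj_on T {..<N}"
    and tiles_boundary: "\<And>i j. i < N \<Longrightarrow> j < N \<Longrightarrow> i \<noteq> j \<Longrightarrow>
          T i \<inter> T j \<subseteq> (top_of_set (sphere 0 1)) frontier_of (T i)
                     \<inter> (top_of_set (sphere 0 1)) frontier_of (T j)"
    and tiles_good: "\<And>I. I \<subseteq> {..<N} \<Longrightarrow> I \<noteq> {} \<Longrightarrow> (\<Inter>i\<in>I. T i) \<noteq> {} \<Longrightarrow>
          fin_disj_union_contractible (\<Inter>i\<in>I. T i)"
    and nbhd_open: "\<And>i. i < N \<Longrightarrow> openin (top_of_set (sphere 0 1)) (U i)"
    and nbhd_sub: "\<And>i. i < N \<Longrightarrow> T i \<subseteq> U i"
    and nbhd_nerve: "\<And>I. I \<subseteq> {..<N} \<Longrightarrow>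
          ((\<Inter>i\<in>I. U i) \<noteq> {} \<longleftrightarrow> (\<Inter>i\<in>I. T i) \<noteq> {})"
    and nbhd_good: "\<And>I. I \<subseteq> {..<N} \<Longrightarrow> I \<noteq> {} \<Longrightarrow> (\<Inter>i\<in>I. U i) \<noteq> {} \<Longrightarrow>
          fin_disj_union_contractible (\<Inter>i\<in>I. U i)"
  shows "(\<exists>I. I \<subseteq> {..<N} \<and> card I = d + 1 \<and> (\<Inter>i\<in>I. T i) \<noteq> {})
       \<and> ((\<forall>i<N. \<forall>j<N. i \<noteq> j \<and> col i = col j \<longrightarrow> T i \<inter> T j = {})
            \<longrightarrow> card (col ` {..<N}) \<ge> d + 1)"
proof -
  have U_sphere: "U i \<subseteq> sphere 0 1" if "i < N" for i
    using openin_subset[OF nbhd_open[OF that]] by simp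
  have "\<exists>I\<subseteq>{..<N}. card I = Suc d \<and> (\<Inter>i\<in>I. U i) \<noteq> {}"
  proof (rule acyclic_open_cover_sphere_meeting[OF _ finite_lessThan])
    show "DIM('a) = Suc d"
      using dim by simp
    show "(\<Union>i\<in>{..<N}. U i) = sphere 0 1"
      using tiles_cover nbhd_sub U_sphere by blast
    show "acyclic_space (top_of_set (\<Inter>i\<in>I. U i))" if "I \<subseteq> {..<N}" "I \<noteq> {}" for I
      using nbhd_good[OF that] acyclic_space_fin_disj_union_contractible acyclic_space_empty
      by (cases "(\<Inter>i\<in>I. U i) = {}") auto
  qed (use nbhd_open in auto)
  then obtain I where I: "I \<subseteq> {..<N}" "card I = d + 1" "(\<Inter>i\<in>I. T i) \<noteq> {}"
    using nbhd_nerve by (metis Suc_eq_plus1)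
  moreover have "card (col ` {..<N}) \<ge> d + 1"
    if "\<forall>i<N. \<forall>j<N. i \<noteq> j \<and> col i = col j \<longrightarrow> T i \<inter> T j = {}"
    using card_le_card_image_if_Inter_nonempty[OF I(1) finite_lessThan I(3)] that I(2) by auto
  ultimately show ?thesis
    by blast
qed

end
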